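(* Let $\tilde X^1,\tilde X^2,\tilde X^3$ be the restrictions to the unit sphere $S^2\subset\mathbb{R}^3$ of the Cartesian coordinate functions, and on $S^2\setminus\{(0,0,1)\}$ define the complex-valued functions $Z=\dfrac{\tilde X^1+i\tilde X^2}{1-\tilde X^3}$, $\bar Z=\dfrac{\tilde X^1-i\tilde X^2}{1-\tilde X^3}$, and the complex vector field $\mathring Y^A=(\epsilon^{CD}\nabla_CZ\nabla_D\bar Z)^{-1}\epsilon^{AB}\nabla_B\bar Z$. For an integer $m$, let $Y^A=Z^{m+1}\mathring Y^A$. Then \[(\Delta+2)\nabla_AY^A=0\quad\text{on }S^2\setminus\{(0,0,1)\}.\]
   Context: $S^2$ carries the round metric $\sigma_{AB}$ induced from $\mathbb{R}^3$, with area form $\epsilon_{AB}$, Levi-Civita connection $\nabla$ and Laplacian $\Delta$ (extended complex-linearly to complex-valued functions and fields); indices raised/lowered with $\sigma$. *)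

theory Defs
  imports "HOL-Analysis.Analysis"
begin

text \<open>Complex-valued functions on (open subsets of) S2 are represented by functions
  real^3 => complex; only their values on S2 matter, since every operator below first
  extends them radially (degree-0 homogeneous extension).  Tangent vectors of S2 at x
  are vectors of R3 orthogonal to x (complexified: complex^3).  Metric sigma is the
  induced one, so raising/lowering indices is the identity on tangent vectors.\<close>

definition S2 :: "(real^3) set" where
  "S2 = sphere 0 1"

definition north :: "real^3" where
  "north = (\<chi> i. if i = 3 then 1 else 0)"

definition south :: "real^3" where
  "south = (\<chi> i. if i = 3 then -1 else 0)"

definition rext :: "(real^3 \<Rightarrow> 'b) \<Rightarrow> real^3 \<Rightarrow> 'b" where
  "rext f y = f (y /\<^sub>R norm y)"

definition pd :: "3 \<Rightarrow> (real^3 \<Rightarrow> complex) \<Rightarrow> real^3 \<Rightarrow> complex" where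
  "pd j F x = frechet_derivative F (at x) (axis j 1)"

definition tproj :: "real^3 \<Rightarrow> 3 \<Rightarrow> 3 \<Rightarrow> real" where
  "tproj x i j = (if i = j then 1 else 0) - x$i * x$j"

definition sgrad :: "(real^3 \<Rightarrow> complex) \<Rightarrow> real^3 \<Rightarrow> complex^3" where
  "sgrad f x = (\<chi> i. \<Sum>j\<in>UNIV. complex_of_real (tproj x i j) * pd j (rext f) x)"

definition sdiv :: "(real^3 \<Rightarrow> complex^3) \<Rightarrow> real^3 \<Rightarrow> complex" where
  "sdiv V x = (\<Sum>i\<in>UNIV. \<Sum>j\<in>UNIV.
      complex_of_real (tproj x i j) * pd j (rext (\<lambda>y. V y $ i)) x)"

definition slap :: "(real^3 \<Rightarrow> complex) \<Rightarrow> real^3 \<Rightarrow> complex" where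
  "slap f x = sdiv (sgrad f) x"

definition ccross :: "complex^3 \<Rightarrow> complex^3 \<Rightarrow> complex^3" where
  "ccross a b = (\<chi> i. if i = 1 then a$2 * b$3 - a$3 * b$2
                      else if i = 2 then a$3 * b$1 - a$1 * b$3
                      else a$1 * b$2 - a$2 * b$1)"

definition cvec :: "real^3 \<Rightarrow> complex^3" where
  "cvec x = (\<chi> i. complex_of_real (x$i))"

definition cdot :: "complex^3 \<Rightarrow> complex^3 \<Rightarrow> complex" where
  "cdot a b = (\<Sum>i\<in>UNIV. a$i * b$i)"

definition cscale :: "complex \<Rightarrow> complex^3 \<Rightarrow> complex^3" where
  "cscale c v = (\<chi> i. c * v$i)"

text \<open>area form (outward orientation): eps^{AB} a_A b_B = x . (a x b),
  and the vector eps^{AB} b_B is b x x\<close>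
definition epsform :: "real^3 \<Rightarrow> complex^3 \<Rightarrow> complex^3 \<Rightarrow> complex" where
  "epsform x a b = cdot (cvec x) (ccross a b)"

definition epsvec :: "real^3 \<Rightarrow> complex^3 \<Rightarrow> complex^3" where
  "epsvec x b = ccross b (cvec x)"

definition Zf :: "real^3 \<Rightarrow> complex" where
  "Zf x = (complex_of_real (x$1) + \<i> * complex_of_real (x$2)) / complex_of_real (1 - x$3)"

definition Zbf :: "real^3 \<Rightarrow> complex" where
  "Zbf x = (complex_of_real (x$1) - \<i> * complex_of_real (x$2)) / complex_of_real (1 - x$3)"

definition Yring :: "real^3 \<Rightarrow> complex^3" where
  "Yring x = cscale (inverse (epsform x (sgrad Zf x) (sgrad Zbf x))) (epsvec x (sgrad Zbf x))"

definition Yfield :: "int \<Rightarrow> real^3 \<Rightarrow> complex^3" where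
  "Yfield m x = cscale (Zf x powi (m + 1)) (Yring x)"

end

theory Submission
  imports Defs
begin

text \<open>
  Write \<open>X = X\<^sup>1 - i X\<^sup>2\<close> (\<open>xminus\<close>). Since \<open>Y\<^sup>A\<close> is
  \<open>\<epsilon>\<^sup>A\<^sup>B \<nabla>\<^sub>B Zbar\<close> divided by \<open>\<epsilon>(\<nabla>Z, \<nabla>Zbar)\<close>, one has
  \<open>Y\<^sup>A \<nabla>\<^sub>A Z = 1\<close>, and a direct computation gives \<open>\<nabla>\<^sub>A Y\<^sup>A = -X\<close>. Hence for every
  \<open>h\<close> holomorphic on the values of \<open>Z\<close>, \<open>\<nabla>\<^sub>A (h(Z) Y\<^sup>A) = h'(Z) - h(Z) X\<close>.
  The stereographic coordinate is harmonic and conformal (\<open>\<Delta>Z = 0\<close>, \<open>\<nabla>Z\<cdot>\<nabla>Z = 0\<close>),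
  so every \<open>h(Z)\<close> is harmonic; moreover \<open>\<nabla>Z\<cdot>\<nabla>X = 1\<close> and \<open>X\<close> is a spherical
  harmonic of degree one, \<open>\<Delta>X = -2X\<close>. The Leibniz rule for \<open>\<Delta>\<close> then gives
  \<open>\<Delta>(h'(Z) - h(Z) X) = -2 (h'(Z) - h(Z) X)\<close>; the theorem is the case \<open>h(w) = w\<^sup>m\<^sup>+\<^sup>1\<close>.

  Surface operators are computed from extensions off the sphere: the surface gradient of
  \<open>f\<close> at \<open>y\<close> is the tangential projection of the ambient gradient of any function
  agreeing with \<open>f\<close> on the sphere near \<open>y\<close>.
\<close>

section \<open>Ambient gradients of complex functions on \<open>\<real>\<^sup>3\<close>\<close>

definition has_cgrad :: "(real^3 \<Rightarrow> complex) \<Rightarrow> complex^3 \<Rightarrow> real^3 \<Rightarrow> bool" where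
  "has_cgrad F g y \<longleftrightarrow> (F has_derivative (\<lambda>v. cdot (cvec v) g)) (at y)"

definition cgrad :: "(real^3 \<Rightarrow> complex) \<Rightarrow> real^3 \<Rightarrow> complex^3" where
  "cgrad F y = (\<chi> j. pd j F y)"

lemma cscale_nth [simp]: "cscale c v $ i = c * v $ i"
  by (simp add: cscale_def)

lemma cdot_add_right: "cdot v (a + b) = cdot v a + cdot v b"
  by (simp add: cdot_def sum.distrib distrib_left)

lemma cdot_diff_right: "cdot v (a - b) = cdot v a - cdot v b"
  by (simp add: cdot_def sum_subtractf right_diff_distrib)

lemma cdot_cscale_right: "cdot v (cscale c a) = c * cdot v a"
  by (simp add: cdot_def sum_distrib_left mult.left_commute)

lemma cdot_cscale_left: "cdot (cscale c a) b = c * cdot a b"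
  by (simp add: cdot_def sum_distrib_left mult.assoc)

lemma cdot_zero_right: "cdot v 0 = 0"
  by (simp add: cdot_def)

lemma cdot_commute: "cdot a b = cdot b a"
  by (simp add: cdot_def mult.commute)

lemma cdot_cvec_axis: "cdot (cvec (axis j 1)) g = g $ j"
  using exhaust_3[of j] by (auto simp: cdot_def cvec_def sum_3 axis_def)

lemma cdot_cvec_sphere: "norm y = 1 \<Longrightarrow> cdot (cvec y) (cvec y) = 1"
  by (simp add: cdot_def cvec_def norm_vec_def L2_set_def sum_3 power2_eq_square
      flip: of_real_mult of_real_add)

lemma has_cgrad_imp_cgrad: "has_cgrad F g y \<Longrightarrow> cgrad F y = g"
  unfolding has_cgrad_def cgrad_def pd_def
  by (simp add: vec_eq_iff cdot_cvec_axis flip: frechet_derivative_at)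

lemma has_cgrad_cong: "has_cgrad F g y \<Longrightarrow> g = g' \<Longrightarrow> has_cgrad F g' y"
  by simp

lemma has_cgrad_const: "has_cgrad (\<lambda>z. c) 0 y"
  unfolding has_cgrad_def cdot_zero_right by (rule has_derivative_const)

lemma has_cgrad_coord: "has_cgrad (\<lambda>z. complex_of_real (z $ k)) (axis k 1) y"
proof -
  have "(\<lambda>v. complex_of_real (v $ k)) = (\<lambda>v. cdot (cvec v) (axis k 1))"
    using exhaust_3[of k] by (auto simp: cdot_def cvec_def axis_def sum_3 fun_eq_iff)
  moreover have "((\<lambda>z. complex_of_real (z $ k)) has_derivative (\<lambda>v. complex_of_real (v $ k))) (at y)"
    by (intro has_derivative_of_real bounded_linear.has_derivative[OF bounded_linear_vec_nth]
        has_derivative_ident)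
  ultimately show ?thesis
    unfolding has_cgrad_def by simp
qed

lemma has_cgrad_add:
  "has_cgrad f a y \<Longrightarrow> has_cgrad g b y \<Longrightarrow> has_cgrad (\<lambda>z. f z + g z) (a + b) y"
  unfolding has_cgrad_def cdot_add_right by (rule has_derivative_add)

lemma has_cgrad_diff:
  "has_cgrad f a y \<Longrightarrow> has_cgrad g b y \<Longrightarrow> has_cgrad (\<lambda>z. f z - g z) (a - b) y"
  unfolding has_cgrad_def cdot_diff_right by (rule has_derivative_diff)

lemma has_cgrad_uminus: "has_cgrad f a y \<Longrightarrow> has_cgrad (\<lambda>z. - f z) (- a) y"
  using has_cgrad_diff[OF has_cgrad_const, of f a y 0] by simp

lemma has_cgrad_mult:
  "has_cgrad f a y \<Longrightarrow> has_cgrad g b y \<Longrightarrow>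
    has_cgrad (\<lambda>z. f z * g z) (cscale (f y) b + cscale (g y) a) y"
  unfolding has_cgrad_def cdot_add_right cdot_cscale_right
  by (drule (1) has_derivative_mult) (simp add: mult.commute)

lemma has_cgrad_cmult: "has_cgrad g b y \<Longrightarrow> has_cgrad (\<lambda>z. c * g z) (cscale c b) y"
  unfolding has_cgrad_def cdot_cscale_right by (rule has_derivative_mult_right)

lemma has_cgrad_divide_const:
  "has_cgrad f a y \<Longrightarrow> has_cgrad (\<lambda>z. f z / c) (cscale (inverse c) a) y"
  using has_cgrad_cmult[of f a y "inverse c"] by (simp add: divide_inverse mult.commute)

lemma has_cgrad_compose:
  assumes "(h has_field_derivative d) (at (f y))" and "has_cgrad f a y"
  shows "has_cgrad (\<lambda>z. h (f z)) (cscale d a) y"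
  using has_derivative_compose[OF assms(2)[unfolded has_cgrad_def]
      assms(1)[unfolded has_field_derivative_def]]
  unfolding has_cgrad_def cdot_cscale_right by simp

lemma has_cgrad_inverse:
  assumes "has_cgrad f a y" and "f y \<noteq> 0"
  shows "has_cgrad (\<lambda>z. inverse (f z)) (cscale (- (inverse (f y) * inverse (f y))) a) y"
  using has_cgrad_compose[OF DERIV_inverse[OF assms(2)] assms(1)]
  by (simp add: power2_eq_square)

lemma has_cgrad_vector_3:
  fixes g :: "3 \<Rightarrow> complex^3"
  assumes "has_cgrad f1 (g 1) y" "has_cgrad f2 (g 2) y" "has_cgrad f3 (g 3) y"
  shows "has_cgrad (\<lambda>z. vector [f1 z, f2 z, f3 z] $ i) (g i) y"
  using exhaust_3[of i] assms by auto

section \<open>Surface operators through ambient gradients\<close>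

definition ctproj :: "real^3 \<Rightarrow> complex^3 \<Rightarrow> complex^3" where
  "ctproj y g = (\<chi> i. g $ i - complex_of_real (y $ i) * cdot (cvec y) g)"

lemma ctproj_add: "ctproj y (a + b) = ctproj y a + ctproj y b"
  by (simp add: ctproj_def vec_eq_iff cdot_add_right algebra_simps)

lemma ctproj_diff: "ctproj y (a - b) = ctproj y a - ctproj y b"
  by (simp add: ctproj_def vec_eq_iff cdot_diff_right algebra_simps)

lemma ctproj_cscale: "ctproj y (cscale c a) = cscale c (ctproj y a)"
  by (simp add: ctproj_def vec_eq_iff cdot_cscale_right algebra_simps)

lemma cdot_cvec_ctproj: "norm y = 1 \<Longrightarrow> cdot (cvec y) (ctproj y g) = 0"
proof -
  have "cdot (cvec y) (ctproj y g) = cdot (cvec y) g - cdot (cvec y) (cvec y) * cdot (cvec y) g"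
    by (simp add: ctproj_def cdot_def cvec_def sum_3 algebra_simps)
  then show "norm y = 1 \<Longrightarrow> ?thesis"
    by (simp add: cdot_cvec_sphere)
qed

lemma ctproj_idem: "norm y = 1 \<Longrightarrow> ctproj y (ctproj y g) = ctproj y g"
  by (simp add: ctproj_def[of y "ctproj y g"] cdot_cvec_ctproj vec_eq_iff)

lemma sgrad_eq_ctproj: "sgrad f y = ctproj y (cgrad (rext f) y)"
  by (simp add: sgrad_def ctproj_def cgrad_def tproj_def vec_eq_iff cdot_def cvec_def
      sum_3 forall_3 algebra_simps)

lemma sdiv_eq_ctproj: "sdiv V y = (\<Sum>i\<in>UNIV. ctproj y (cgrad (rext (\<lambda>z. V z $ i)) y) $ i)"
  by (simp add: sdiv_def ctproj_def cgrad_def tproj_def cdot_def cvec_def sum_3 algebra_simps)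

lemma rext_sphere: "y \<in> S2 \<Longrightarrow> rext f y = f y"
  by (simp add: rext_def S2_def)

lemma rext_diff: "rext (\<lambda>z. f z - g z) = (\<lambda>z. rext f z - rext g z)"
  and rext_add: "rext (\<lambda>z. f z + g z) = (\<lambda>z. rext f z + rext g z)"
  and rext_mult: "rext (\<lambda>z. f z * g z) = (\<lambda>z. rext f z * rext g z)"
  and rext_compose: "rext (\<lambda>z. h (f z)) = (\<lambda>z. h (rext f z))"
  by (simp_all add: rext_def[abs_def])

lemma has_derivative_normalize:
  fixes y :: "real^3"
  assumes "norm y = 1"
  shows "((\<lambda>z. z /\<^sub>R norm z) has_derivative (\<lambda>v. v - (y \<bullet> v) *\<^sub>R y)) (at y)"
proof -
  have y0: "y \<noteq> 0"
    using assms by auto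
  have "((\<lambda>z. inverse (norm z) *\<^sub>R z) has_derivative
     (\<lambda>v. inverse (norm y) *\<^sub>R v + (- (inverse (norm y) * (v \<bullet> sgn y) * inverse (norm y))) *\<^sub>R y)) (at y)"
    by (rule derivative_eq_intros has_derivative_norm[OF y0] has_derivative_ident | simp add: y0)+
  then show ?thesis
    using assms by (simp add: sgn_div_norm inner_commute divide_inverse_commute)
qed

lemma cdot_cvec_tangential: "cdot (cvec (v - (y \<bullet> v) *\<^sub>R y)) g = cdot (cvec v) (ctproj y g)"
  by (simp add: ctproj_def cdot_def cvec_def sum_3 inner_vec_def algebra_simps)

lemma has_cgrad_rext:
  assumes "y \<in> S2" and "has_cgrad F g y"
  shows "has_cgrad (rext F) (ctproj y g) y"
proof -
  have y: "norm y = 1"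
    using assms(1) by (simp add: S2_def)
  with assms(2) have "(F has_derivative (\<lambda>v. cdot (cvec v) g)) (at (y /\<^sub>R norm y))"
    by (simp add: has_cgrad_def)
  from has_derivative_compose[OF has_derivative_normalize[OF y] this]
  show ?thesis
    unfolding has_cgrad_def rext_def[abs_def] cdot_cvec_tangential .
qed

definition sdifferentiable :: "(real^3 \<Rightarrow> complex) \<Rightarrow> real^3 \<Rightarrow> bool" where
  "sdifferentiable f y \<longleftrightarrow> (\<exists>g. has_cgrad (rext f) g y)"

lemma sdifferentiableD: "sdifferentiable f y \<Longrightarrow> has_cgrad (rext f) (cgrad (rext f) y) y"
  unfolding sdifferentiable_def using has_cgrad_imp_cgrad by metis

lemma has_cgrad_imp_sdifferentiable: "y \<in> S2 \<Longrightarrow> has_cgrad F g y \<Longrightarrow> sdifferentiable F y"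
  unfolding sdifferentiable_def using has_cgrad_rext by blast

lemma has_cgrad_imp_sgrad: "y \<in> S2 \<Longrightarrow> has_cgrad F g y \<Longrightarrow> sgrad F y = ctproj y g"
  by (simp add: sgrad_eq_ctproj has_cgrad_imp_cgrad[OF has_cgrad_rext] ctproj_idem S2_def)

lemma has_cgrad_imp_sdiv:
  assumes "y \<in> S2" "\<And>i. has_cgrad (\<lambda>z. V z $ i) (gs i) y"
  shows "sdiv V y = (\<Sum>i\<in>UNIV. ctproj y (gs i) $ i)"
  using has_cgrad_imp_cgrad[OF has_cgrad_rext[OF assms]] assms(1)
  by (simp add: sdiv_eq_ctproj ctproj_idem S2_def)

lemma frechet_derivative_cong_open:
  assumes "open X" "y \<in> X" "\<And>z. z \<in> X \<Longrightarrow> F z = G z"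
  shows "frechet_derivative F (at y) = frechet_derivative G (at y)"
proof -
  have "(F has_derivative D) (at y) \<longleftrightarrow> (G has_derivative D) (at y)" for D
    using has_derivative_transform_within_open[of F D y UNIV X G]
      has_derivative_transform_within_open[of G D y UNIV X F] assms by auto
  then show ?thesis
    unfolding frechet_derivative_def by simp
qed

lemma rext_cong:
  assumes "open U" and "\<And>z. z \<in> S2 \<inter> U \<Longrightarrow> f z = g z"
  shows "\<exists>X. open X \<and> S2 \<inter> U \<subseteq> X \<and> (\<forall>z\<in>X. rext f z = rext g z)"
proof (intro exI conjI ballI)
  let ?X = "(- {0}) \<inter> sgn -` U"
  show "open ?X"
    using continuous_on_sgn[OF continuous_on_id, of "- {0}"]
    by (intro continuous_open_preimage assms(1)) auto
  show "S2 \<inter> U \<subseteq> ?X"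
    by (auto simp: S2_def sgn_div_norm)
  fix z assume "z \<in> ?X"
  then have "sgn z \<in> S2 \<inter> U"
    by (auto simp: S2_def norm_sgn)
  then show "rext f z = rext g z"
    using assms(2) by (simp add: rext_def sgn_div_norm)
qed

lemma cgrad_rext_cong:
  assumes "open U" "y \<in> S2 \<inter> U" "\<And>z. z \<in> S2 \<inter> U \<Longrightarrow> f z = g z"
  shows "cgrad (rext f) y = cgrad (rext g) y"
proof -
  from rext_cong[of U f g, OF assms(1,3)] obtain X
    where X: "open X" "S2 \<inter> U \<subseteq> X" "\<forall>z\<in>X. rext f z = rext g z"
    by blast
  have "y \<in> X"
    using X(2) assms(2) by blast
  with X have "frechet_derivative (rext f) (at y) = frechet_derivative (rext g) (at y)"
    by (intro frechet_derivative_cong_open[OF X(1)]) simp_all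
  then show ?thesis
    by (simp add: cgrad_def pd_def)
qed

lemma sdifferentiable_cong:
  assumes "open U" "y \<in> S2 \<inter> U" "\<And>z. z \<in> S2 \<inter> U \<Longrightarrow> f z = g z"
    and "sdifferentiable f y"
  shows "sdifferentiable g y"
proof -
  from rext_cong[of U f g, OF assms(1,3)] obtain X
    where X: "open X" "S2 \<inter> U \<subseteq> X" "\<forall>z\<in>X. rext f z = rext g z"
    by blast
  have "y \<in> X"
    using X(2) assms(2) by blast
  from assms(4) obtain a where "has_cgrad (rext f) a y"
    by (auto simp: sdifferentiable_def)
  then have "has_cgrad (rext g) a y"
    unfolding has_cgrad_def
    using has_derivative_transform_within_open[OF _ X(1) \<open>y \<in> X\<close>] X(3) by blast
  then show ?thesis
    by (auto simp: sdifferentiable_def)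
qed

lemma sgrad_cong:
  "open U \<Longrightarrow> y \<in> S2 \<inter> U \<Longrightarrow> (\<And>z. z \<in> S2 \<inter> U \<Longrightarrow> f z = g z) \<Longrightarrow> sgrad f y = sgrad g y"
  using cgrad_rext_cong[of U y f g] by (simp add: sgrad_eq_ctproj)

lemma sdiv_cong:
  assumes "open U" "y \<in> S2 \<inter> U" "\<And>z. z \<in> S2 \<inter> U \<Longrightarrow> V z = W z"
  shows "sdiv V y = sdiv W y"
proof -
  have "cgrad (rext (\<lambda>z. V z $ i)) y = cgrad (rext (\<lambda>z. W z $ i)) y" for i
    using assms by (intro cgrad_rext_cong[OF assms(1,2)]) auto
  then show ?thesis
    by (simp add: sdiv_eq_ctproj)
qed

lemma slap_cong:
  assumes "open U" "y \<in> S2 \<inter> U" "\<And>z. z \<in> S2 \<inter> U \<Longrightarrow> f z = g z"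
  shows "slap f y = slap g y"
proof -
  have "sgrad f z = sgrad g z" if "z \<in> S2 \<inter> U" for z
    using sgrad_cong[OF assms(1) that assms(3)] .
  then show ?thesis
    unfolding slap_def by (rule sdiv_cong[OF assms(1,2)])
qed

lemma has_cgrad_rext_add:
  "sdifferentiable f y \<Longrightarrow> sdifferentiable g y \<Longrightarrow>
    has_cgrad (rext (\<lambda>z. f z + g z)) (cgrad (rext f) y + cgrad (rext g) y) y"
  unfolding rext_add by (intro has_cgrad_add sdifferentiableD)

lemma has_cgrad_rext_diff:
  "sdifferentiable f y \<Longrightarrow> sdifferentiable g y \<Longrightarrow>
    has_cgrad (rext (\<lambda>z. f z - g z)) (cgrad (rext f) y - cgrad (rext g) y) y"
  unfolding rext_diff by (intro has_cgrad_diff sdifferentiableD)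

lemma has_cgrad_rext_mult:
  assumes "y \<in> S2" "sdifferentiable f y" "sdifferentiable g y"
  shows "has_cgrad (rext (\<lambda>z. f z * g z))
    (cscale (f y) (cgrad (rext g) y) + cscale (g y) (cgrad (rext f) y)) y"
  using has_cgrad_mult[OF sdifferentiableD[OF assms(2)] sdifferentiableD[OF assms(3)]]
  unfolding rext_mult by (simp add: rext_sphere assms(1))

lemma has_cgrad_rext_compose:
  assumes "y \<in> S2" "sdifferentiable f y" "(h has_field_derivative d) (at (f y))"
  shows "has_cgrad (rext (\<lambda>z. h (f z))) (cscale d (cgrad (rext f) y)) y"
  using assms(3) unfolding rext_compose
  by (intro has_cgrad_compose sdifferentiableD assms(2)) (simp add: rext_sphere assms(1))

lemma sdifferentiable_add:
  "sdifferentiable f y \<Longrightarrow> sdifferentiable g y \<Longrightarrow> sdifferentiable (\<lambda>z. f z + g z) y"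
  using has_cgrad_rext_add unfolding sdifferentiable_def by blast

lemma sdifferentiable_mult:
  "y \<in> S2 \<Longrightarrow> sdifferentiable f y \<Longrightarrow> sdifferentiable g y \<Longrightarrow> sdifferentiable (\<lambda>z. f z * g z) y"
  using has_cgrad_rext_mult unfolding sdifferentiable_def by blast

lemma sdifferentiable_compose:
  "y \<in> S2 \<Longrightarrow> sdifferentiable f y \<Longrightarrow> (h has_field_derivative d) (at (f y)) \<Longrightarrow>
    sdifferentiable (\<lambda>z. h (f z)) y"
  using has_cgrad_rext_compose unfolding sdifferentiable_def by blast

lemma sgrad_diff:
  "sdifferentiable f y \<Longrightarrow> sdifferentiable g y \<Longrightarrow>
    sgrad (\<lambda>z. f z - g z) y = sgrad f y - sgrad g y"
  by (simp add: sgrad_eq_ctproj has_cgrad_imp_cgrad[OF has_cgrad_rext_diff] ctproj_diff)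

lemma sgrad_mult:
  "y \<in> S2 \<Longrightarrow> sdifferentiable f y \<Longrightarrow> sdifferentiable g y \<Longrightarrow>
    sgrad (\<lambda>z. f z * g z) y = cscale (f y) (sgrad g y) + cscale (g y) (sgrad f y)"
  by (simp add: sgrad_eq_ctproj has_cgrad_imp_cgrad[OF has_cgrad_rext_mult] ctproj_add ctproj_cscale)

lemma sgrad_compose:
  "y \<in> S2 \<Longrightarrow> sdifferentiable f y \<Longrightarrow> (h has_field_derivative d) (at (f y)) \<Longrightarrow>
    sgrad (\<lambda>z. h (f z)) y = cscale d (sgrad f y)"
  by (simp add: sgrad_eq_ctproj has_cgrad_imp_cgrad[OF has_cgrad_rext_compose] ctproj_cscale)

lemma sdiv_add:
  assumes "\<And>i. sdifferentiable (\<lambda>z. V z $ i) y" "\<And>i. sdifferentiable (\<lambda>z. W z $ i) y"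
  shows "sdiv (\<lambda>z. V z + W z) y = sdiv V y + sdiv W y"
  using has_cgrad_imp_cgrad[OF has_cgrad_rext_add[OF assms]]
  by (simp add: sdiv_eq_ctproj ctproj_add sum.distrib)

lemma sdiv_diff:
  assumes "\<And>i. sdifferentiable (\<lambda>z. V z $ i) y" "\<And>i. sdifferentiable (\<lambda>z. W z $ i) y"
  shows "sdiv (\<lambda>z. V z - W z) y = sdiv V y - sdiv W y"
  using has_cgrad_imp_cgrad[OF has_cgrad_rext_diff[OF assms]]
  by (simp add: sdiv_eq_ctproj ctproj_diff sum_subtractf)

lemma sdiv_cscale:
  assumes "y \<in> S2" "sdifferentiable f y" "\<And>i. sdifferentiable (\<lambda>z. V z $ i) y"
  shows "sdiv (\<lambda>z. cscale (f z) (V z)) y = cdot (sgrad f y) (V y) + f y * sdiv V y"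
  using has_cgrad_imp_cgrad[OF has_cgrad_rext_mult[OF assms(1,2) assms(3)]]
  by (simp add: sdiv_eq_ctproj sgrad_eq_ctproj cdot_def ctproj_add ctproj_cscale
      sum.distrib sum_distrib_left mult.commute)

section \<open>Leibniz and chain rules for the Laplacian\<close>

definition twice_sdifferentiable_on :: "(real^3) set \<Rightarrow> (real^3 \<Rightarrow> complex) \<Rightarrow> bool" where
  "twice_sdifferentiable_on U f \<longleftrightarrow>
    (\<forall>z\<in>S2 \<inter> U. sdifferentiable f z \<and> (\<forall>i. sdifferentiable (\<lambda>w. sgrad f w $ i) z))"

lemma twice_sdifferentiable_onD:
  assumes "twice_sdifferentiable_on U f" "z \<in> S2 \<inter> U"
  shows "sdifferentiable f z" "sdifferentiable (\<lambda>w. sgrad f w $ i) z"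
  using assms by (auto simp: twice_sdifferentiable_on_def)

lemma twice_sdifferentiable_onI:
  assumes "open U"
    and "\<And>z. z \<in> S2 \<inter> U \<Longrightarrow> sdifferentiable f z"
    and "\<And>i z. z \<in> S2 \<inter> U \<Longrightarrow> sdifferentiable (\<lambda>w. G w $ i) z"
    and "\<And>z. z \<in> S2 \<inter> U \<Longrightarrow> sgrad f z = G z"
  shows "twice_sdifferentiable_on U f"
  unfolding twice_sdifferentiable_on_def
proof (intro ballI conjI allI)
  fix z i assume z: "z \<in> S2 \<inter> U"
  show "sdifferentiable f z"
    using assms(2)[OF z] .
  show "sdifferentiable (\<lambda>w. sgrad f w $ i) z"
    using assms(4) by (intro sdifferentiable_cong[OF assms(1) z _ assms(3)[OF z]]) simp
qed

lemma twice_sdifferentiable_on_mult: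
  assumes U: "open U" and f: "twice_sdifferentiable_on U f" and g: "twice_sdifferentiable_on U g"
  shows "twice_sdifferentiable_on U (\<lambda>z. f z * g z)"
proof (rule twice_sdifferentiable_onI[OF U])
  fix z i assume z: "z \<in> S2 \<inter> U"
  then have z2: "z \<in> S2"
    by blast
  note df = twice_sdifferentiable_onD[OF f z] and dg = twice_sdifferentiable_onD[OF g z]
  show "sdifferentiable (\<lambda>z. f z * g z) z"
    using z2 df(1) dg(1) by (rule sdifferentiable_mult)
  show "sdifferentiable (\<lambda>w. (cscale (f w) (sgrad g w) + cscale (g w) (sgrad f w)) $ i) z"
    using sdifferentiable_add[OF sdifferentiable_mult[OF z2 df(1) dg(2)]
        sdifferentiable_mult[OF z2 dg(1) df(2)]]
    by simp
  show "sgrad (\<lambda>z. f z * g z) z = cscale (f z) (sgrad g z) + cscale (g z) (sgrad f z)"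
    using z2 df(1) dg(1) by (rule sgrad_mult)
qed

lemma twice_sdifferentiable_on_compose:
  assumes U: "open U" and f: "twice_sdifferentiable_on U f" and D: "\<And>z. z \<in> S2 \<inter> U \<Longrightarrow> f z \<in> D"
    and h: "\<And>w. w \<in> D \<Longrightarrow> (h has_field_derivative h' w) (at w)"
    and h': "\<And>w. w \<in> D \<Longrightarrow> (h' has_field_derivative h'' w) (at w)"
  shows "twice_sdifferentiable_on U (\<lambda>z. h (f z))"
proof (rule twice_sdifferentiable_onI[OF U])
  fix z i assume z: "z \<in> S2 \<inter> U"
  then have z2: "z \<in> S2"
    by blast
  note df = twice_sdifferentiable_onD[OF f z]
  show "sdifferentiable (\<lambda>z. h (f z)) z"
    using sdifferentiable_compose[OF z2 df(1) h[OF D[OF z]]] .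
  show "sdifferentiable (\<lambda>w. cscale (h' (f w)) (sgrad f w) $ i) z"
    using sdifferentiable_mult[OF z2 sdifferentiable_compose[OF z2 df(1) h'[OF D[OF z]]] df(2)]
    by simp
  show "sgrad (\<lambda>z. h (f z)) z = cscale (h' (f z)) (sgrad f z)"
    using sgrad_compose[OF z2 df(1) h[OF D[OF z]]] .
qed

lemma slap_diff:
  assumes U: "open U" "y \<in> S2 \<inter> U"
    and f: "twice_sdifferentiable_on U f" and g: "twice_sdifferentiable_on U g"
  shows "slap (\<lambda>z. f z - g z) y = slap f y - slap g y"
proof -
  have "slap (\<lambda>z. f z - g z) y = sdiv (\<lambda>z. sgrad f z - sgrad g z) y"
    unfolding slap_def
    by (rule sdiv_cong[OF U], rule sgrad_diff)
       (auto intro: twice_sdifferentiable_onD[OF f] twice_sdifferentiable_onD[OF g])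
  also have "\<dots> = slap f y - slap g y"
    unfolding slap_def
    by (rule sdiv_diff)
       (auto intro: twice_sdifferentiable_onD[OF f U(2)] twice_sdifferentiable_onD[OF g U(2)])
  finally show ?thesis .
qed

lemma slap_mult:
  assumes U: "open U" "y \<in> S2 \<inter> U"
    and f: "twice_sdifferentiable_on U f" and g: "twice_sdifferentiable_on U g"
  shows "slap (\<lambda>z. f z * g z) y =
    f y * slap g y + 2 * cdot (sgrad f y) (sgrad g y) + g y * slap f y"
proof -
  have y: "y \<in> S2"
    using U(2) by blast
  note df = twice_sdifferentiable_onD[OF f U(2)] and dg = twice_sdifferentiable_onD[OF g U(2)]
  have "slap (\<lambda>z. f z * g z) y = sdiv (\<lambda>z. cscale (f z) (sgrad g z) + cscale (g z) (sgrad f z)) y"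
    unfolding slap_def
    by (rule sdiv_cong[OF U], rule sgrad_mult)
       (auto intro: twice_sdifferentiable_onD[OF f] twice_sdifferentiable_onD[OF g])
  also have "\<dots> = sdiv (\<lambda>z. cscale (f z) (sgrad g z)) y + sdiv (\<lambda>z. cscale (g z) (sgrad f z)) y"
    using sdifferentiable_mult[OF y df(1) dg(2)] sdifferentiable_mult[OF y dg(1) df(2)]
    by (intro sdiv_add) simp_all
  also have "sdiv (\<lambda>z. cscale (f z) (sgrad g z)) y = cdot (sgrad f y) (sgrad g y) + f y * slap g y"
    unfolding slap_def using df(1) dg(2) by (rule sdiv_cscale[OF y])
  also have "sdiv (\<lambda>z. cscale (g z) (sgrad f z)) y = cdot (sgrad f y) (sgrad g y) + g y * slap f y"
    unfolding slap_def cdot_commute[of "sgrad f y"] using dg(1) df(2) by (rule sdiv_cscale[OF y])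
  finally show ?thesis
    by simp
qed

lemma slap_compose:
  assumes U: "open U" "y \<in> S2 \<inter> U"
    and f: "twice_sdifferentiable_on U f" and D: "\<And>z. z \<in> S2 \<inter> U \<Longrightarrow> f z \<in> D"
    and h: "\<And>w. w \<in> D \<Longrightarrow> (h has_field_derivative h' w) (at w)"
    and h': "\<And>w. w \<in> D \<Longrightarrow> (h' has_field_derivative h'' w) (at w)"
  shows "slap (\<lambda>z. h (f z)) y = h'' (f y) * cdot (sgrad f y) (sgrad f y) + h' (f y) * slap f y"
proof -
  have y: "y \<in> S2"
    using U(2) by blast
  note df = twice_sdifferentiable_onD[OF f U(2)]
  have "slap (\<lambda>z. h (f z)) y = sdiv (\<lambda>z. cscale (h' (f z)) (sgrad f z)) y"
    unfolding slap_def
  proof (rule sdiv_cong[OF U])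
    fix z assume z: "z \<in> S2 \<inter> U"
    show "sgrad (\<lambda>z. h (f z)) z = cscale (h' (f z)) (sgrad f z)"
      using z twice_sdifferentiable_onD(1)[OF f z] h[OF D[OF z]] by (intro sgrad_compose) auto
  qed
  also have "\<dots> = cdot (sgrad (\<lambda>z. h' (f z)) y) (sgrad f y) + h' (f y) * slap f y"
    unfolding slap_def
    using sdifferentiable_compose[OF y df(1) h'[OF D[OF U(2)]]] df(2) by (rule sdiv_cscale[OF y])
  also have "sgrad (\<lambda>z. h' (f z)) y = cscale (h'' (f y)) (sgrad f y)"
    using sgrad_compose[OF y df(1) h'[OF D[OF U(2)]]] .
  finally show ?thesis
    by (simp add: cdot_cscale_left)
qed

section \<open>Stereographic coordinates\<close>

definition xden :: "real^3 \<Rightarrow> complex" where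
  "xden z = 1 - complex_of_real (z $ 3)"

definition xplus :: "real^3 \<Rightarrow> complex" where
  "xplus z = complex_of_real (z $ 1) + \<i> * complex_of_real (z $ 2)"

definition xminus :: "real^3 \<Rightarrow> complex" where
  "xminus z = complex_of_real (z $ 1) - \<i> * complex_of_real (z $ 2)"

lemma Zf_eq: "Zf = (\<lambda>z. xplus z * inverse (xden z))"
  by (simp add: fun_eq_iff Zf_def xplus_def xden_def divide_inverse)

lemma Zbf_eq: "Zbf = (\<lambda>z. xminus z * inverse (xden z))"
  by (simp add: fun_eq_iff Zbf_def xminus_def xden_def divide_inverse)

lemma S2_coords: "y \<in> S2 \<Longrightarrow> (y $ 1)\<^sup>2 + (y $ 2)\<^sup>2 + (y $ 3)\<^sup>2 = 1"
proof -
  assume "y \<in> S2"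
  then have "(norm y)\<^sup>2 = 1"
    by (simp add: S2_def)
  then show ?thesis
    by (simp add: norm_vec_def L2_set_def sum_3)
qed

lemma S2_coords_complex:
  "y \<in> S2 \<Longrightarrow>
    (complex_of_real (y $ 1))\<^sup>2 + (complex_of_real (y $ 2))\<^sup>2 + (complex_of_real (y $ 3))\<^sup>2 = 1"
  using S2_coords[of y] by (simp flip: of_real_power of_real_add)

lemma xden_nonzero:
  assumes "y \<in> S2" "y \<noteq> north"
  shows "xden y \<noteq> 0"
proof
  assume "xden y = 0"
  then have y3: "y $ 3 = 1"
    by (simp add: xden_def complex_eq_iff)
  then have "(y $ 1)\<^sup>2 + (y $ 2)\<^sup>2 = 0"
    using S2_coords[OF assms(1)] by simp
  then have "y $ 1 = 0" "y $ 2 = 0"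
    by (simp_all add: sum_power2_eq_zero_iff)
  with y3 have "y = north"
    by (simp add: north_def vec_eq_iff forall_3)
  with assms(2) show False ..
qed

lemma Zf_nonzero:
  assumes "y \<in> S2" "y \<noteq> north" "y \<noteq> south"
  shows "Zf y \<noteq> 0"
proof
  assume "Zf y = 0"
  then have "xplus y = 0"
    using xden_nonzero[OF assms(1,2)] by (simp add: Zf_eq)
  then have y12: "y $ 1 = 0" "y $ 2 = 0"
    by (simp_all add: xplus_def complex_eq_iff)
  then have "(y $ 3)\<^sup>2 = 1"
    using S2_coords[OF assms(1)] by simp
  then have "y = north \<or> y = south"
    using y12 by (auto simp: power2_eq_1_iff north_def south_def vec_eq_iff forall_3)
  with assms(2,3) show False
    by blast
qed

lemma has_cgrad_xden: "has_cgrad xden (- axis 3 1) y"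
  using has_cgrad_diff[OF has_cgrad_const[of 1 y] has_cgrad_coord[of 3 y]]
  by (simp add: xden_def[abs_def])

lemma has_cgrad_xplus: "has_cgrad xplus (axis 1 1 + cscale \<i> (axis 2 1)) y"
  unfolding xplus_def[abs_def] by (intro has_cgrad_add has_cgrad_cmult has_cgrad_coord)

lemma has_cgrad_xminus: "has_cgrad xminus (axis 1 1 - cscale \<i> (axis 2 1)) y"
  unfolding xminus_def[abs_def] by (intro has_cgrad_diff has_cgrad_cmult has_cgrad_coord)

lemmas has_cgrad_rules =
  has_cgrad_uminus has_cgrad_add has_cgrad_diff has_cgrad_mult has_cgrad_cmult
  has_cgrad_divide_const has_cgrad_coord has_cgrad_const has_cgrad_xden has_cgrad_xplus
  has_cgrad_xminus

definition Zf_grad :: "real^3 \<Rightarrow> complex^3" where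
  "Zf_grad y = vector [1 / xden y, \<i> / xden y, xplus y / (xden y)\<^sup>2]"

definition Zbf_grad :: "real^3 \<Rightarrow> complex^3" where
  "Zbf_grad y = vector [1 / xden y, - \<i> / xden y, xminus y / (xden y)\<^sup>2]"

lemma has_cgrad_Zf:
  assumes "xden y \<noteq> 0"
  shows "has_cgrad Zf (Zf_grad y) y"
  unfolding Zf_eq
  by (rule has_cgrad_cong, (rule has_cgrad_rules has_cgrad_inverse assms)+)
     (simp add: vec_eq_iff forall_3 Zf_grad_def axis_def field_simps power2_eq_square assms)

lemma has_cgrad_Zbf:
  assumes "xden y \<noteq> 0"
  shows "has_cgrad Zbf (Zbf_grad y) y"
  unfolding Zbf_eq
  by (rule has_cgrad_cong, (rule has_cgrad_rules has_cgrad_inverse assms)+)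
     (simp add: vec_eq_iff forall_3 Zbf_grad_def axis_def field_simps power2_eq_square assms)

lemma of_real_coord3: "complex_of_real (y $ 3) = 1 - xden y"
  by (simp add: xden_def)

text \<open>Explicit extensions off the sphere of \<open>sgrad Zf\<close>, \<open>sgrad xminus\<close> and \<open>Yring\<close>;
  row \<open>i\<close> of each \<open>_jac\<close> is the ambient gradient of component \<open>i\<close>.\<close>

definition Zf_sgrad :: "real^3 \<Rightarrow> complex^3" where
  "Zf_sgrad z = vector
    [(xden z - xplus z * complex_of_real (z $ 1)) * (inverse (xden z) * inverse (xden z)),
     (\<i> * xden z - xplus z * complex_of_real (z $ 2)) * (inverse (xden z) * inverse (xden z)),
     xplus z * inverse (xden z)]"

definition xminus_sgrad :: "real^3 \<Rightarrow> complex^3" where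
  "xminus_sgrad z = vector
    [1 - xminus z * complex_of_real (z $ 1),
     - \<i> - xminus z * complex_of_real (z $ 2),
     - xminus z * complex_of_real (z $ 3)]"

definition Yring_formula :: "real^3 \<Rightarrow> complex^3" where
  "Yring_formula z = vector
    [(- complex_of_real (z $ 3) * xden z + \<i> * xminus z * complex_of_real (z $ 2)) / 2,
     (- \<i> * xminus z * complex_of_real (z $ 1) + \<i> * complex_of_real (z $ 3) * xden z) / 2,
     xden z * xminus z / 2]"

lemma ctproj_Zf_grad: "xden y \<noteq> 0 \<Longrightarrow> ctproj y (Zf_grad y) = Zf_sgrad y"
  by (simp add: vec_eq_iff forall_3 ctproj_def cdot_def cvec_def sum_3 Zf_grad_def Zf_sgrad_def
      xplus_def field_simps of_real_coord3) algebra+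

lemma ctproj_xminus_grad: "ctproj y (axis 1 1 - cscale \<i> (axis 2 1)) = xminus_sgrad y"
  by (simp add: vec_eq_iff forall_3 ctproj_def cdot_def cvec_def sum_3 axis_def xminus_sgrad_def
      xminus_def algebra_simps)

lemma sgrad_Zf: "y \<in> S2 - {north} \<Longrightarrow> sgrad Zf y = Zf_sgrad y"
  using xden_nonzero[of y]
  by (simp add: has_cgrad_imp_sgrad[OF _ has_cgrad_Zf] ctproj_Zf_grad)

lemma sgrad_Zbf: "y \<in> S2 - {north} \<Longrightarrow> sgrad Zbf y = ctproj y (Zbf_grad y)"
  using xden_nonzero[of y] by (simp add: has_cgrad_imp_sgrad[OF _ has_cgrad_Zbf])

lemma sgrad_xminus: "y \<in> S2 \<Longrightarrow> sgrad xminus y = xminus_sgrad y"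
  by (simp add: has_cgrad_imp_sgrad[OF _ has_cgrad_xminus] ctproj_xminus_grad)

lemma cdot_epsvec: "cdot a (epsvec x b) = epsform x a b"
  by (simp add: epsvec_def epsform_def cdot_def ccross_def cvec_def sum_3 algebra_simps)

lemma epsform_ctproj: "epsform y (ctproj y a) (ctproj y b) = epsform y a b"
  by (simp add: epsform_def ctproj_def cdot_def ccross_def cvec_def sum_3) algebra

lemma epsvec_ctproj: "epsvec y (ctproj y b) = epsvec y b"
  by (simp add: epsvec_def ctproj_def cdot_def ccross_def cvec_def sum_3 vec_eq_iff forall_3) algebra

lemma epsform_sgrad_Zf_Zbf:
  assumes "y \<in> S2 - {north}"
  shows "epsform y (sgrad Zf y) (sgrad Zbf y) = 2 * \<i> / (xden y)\<^sup>2"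
proof -
  have w: "xden y \<noteq> 0"
    using assms xden_nonzero by blast
  have y: "y \<in> S2"
    using assms by blast
  have "epsform y (sgrad Zf y) (sgrad Zbf y) = epsform y (Zf_grad y) (Zbf_grad y)"
    by (simp add: has_cgrad_imp_sgrad[OF y has_cgrad_Zf[OF w]] has_cgrad_imp_sgrad[OF y has_cgrad_Zbf[OF w]]
        epsform_ctproj)
  also have "\<dots> = 2 * \<i> / (xden y)\<^sup>2"
    using S2_coords_complex[OF y] w
    by (simp add: epsform_def cdot_def ccross_def cvec_def sum_3 Zf_grad_def Zbf_grad_def
        xplus_def xminus_def of_real_coord3 field_simps) algebra
  finally show ?thesis .
qed

lemma Yring_eq:
  assumes "y \<in> S2 - {north}"
  shows "Yring y = Yring_formula y"
proof -
  have w: "xden y \<noteq> 0"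
    using assms xden_nonzero by blast
  have y: "y \<in> S2"
    using assms by blast
  have "Yring y = cscale (inverse (2 * \<i> / (xden y)\<^sup>2)) (epsvec y (Zbf_grad y))"
    unfolding Yring_def epsform_sgrad_Zf_Zbf[OF assms] unfolding sgrad_Zbf[OF assms] epsvec_ctproj ..
  also have "\<dots> = Yring_formula y"
    using S2_coords_complex[OF y] w
    by (simp add: vec_eq_iff forall_3 epsvec_def ccross_def cvec_def Zbf_grad_def Yring_formula_def
        xplus_def xminus_def of_real_coord3 field_simps)
       (simp add: algebra_simps power4_eq_xxxx power2_eq_square)
  finally show ?thesis .
qed

lemma cdot_sgrad_Zf_Yring:
  assumes "y \<in> S2 - {north}"
  shows "cdot (sgrad Zf y) (Yring y) = 1"
  using epsform_sgrad_Zf_Zbf[OF assms] xden_nonzero[of y] assms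
  by (simp add: Yring_def cdot_cscale_right cdot_epsvec)

definition Zf_sgrad_jac :: "real^3 \<Rightarrow> 3 \<Rightarrow> complex^3" where
  "Zf_sgrad_jac y i =
    (let A = complex_of_real (y $ 1); B = complex_of_real (y $ 2); W = xden y; u = xplus y in
     if i = 1 then vector [- (2 * A + \<i> * B) / W\<^sup>2, - \<i> * A / W\<^sup>2, 1 / W\<^sup>2 - 2 * u * A / W ^ 3]
     else if i = 2 then vector [- B / W\<^sup>2, - (A + 2 * \<i> * B) / W\<^sup>2, \<i> / W\<^sup>2 - 2 * u * B / W ^ 3]
     else vector [1 / W, \<i> / W, u / W\<^sup>2])"

definition xminus_sgrad_jac :: "real^3 \<Rightarrow> 3 \<Rightarrow> complex^3" where
  "xminus_sgrad_jac y i =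
    (let A = complex_of_real (y $ 1); B = complex_of_real (y $ 2); C = complex_of_real (y $ 3) in
     if i = 1 then vector [- (2 * A - \<i> * B), \<i> * A, 0]
     else if i = 2 then vector [- B, - A + 2 * \<i> * B, 0]
     else vector [- C, \<i> * C, - xminus y])"

definition Yring_formula_jac :: "real^3 \<Rightarrow> 3 \<Rightarrow> complex^3" where
  "Yring_formula_jac y i =
    (let A = complex_of_real (y $ 1); B = complex_of_real (y $ 2); C = complex_of_real (y $ 3) in
     if i = 1 then vector [\<i> * B / 2, (\<i> * A + 2 * B) / 2, (2 * C - 1) / 2]
     else if i = 2 then vector [(- 2 * \<i> * A - B) / 2, - A / 2, (\<i> - 2 * \<i> * C) / 2]
     else vector [xden y / 2, - \<i> * xden y / 2, - xminus y / 2])"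

lemma has_cgrad_Zf_sgrad:
  assumes w: "xden y \<noteq> 0"
  shows "has_cgrad (\<lambda>z. Zf_sgrad z $ i) (Zf_sgrad_jac y i) y"
  unfolding Zf_sgrad_def
  by (rule has_cgrad_vector_3;
      rule has_cgrad_cong, (rule has_cgrad_rules has_cgrad_inverse w)+;
      simp add: vec_eq_iff forall_3 Zf_sgrad_jac_def Let_def xplus_def axis_def field_simps w;
      (intro conjI disjI2)?; algebra)

lemma has_cgrad_xminus_sgrad: "has_cgrad (\<lambda>z. xminus_sgrad z $ i) (xminus_sgrad_jac y i) y"
  unfolding xminus_sgrad_def
  by (rule has_cgrad_vector_3;
      rule has_cgrad_cong, (rule has_cgrad_rules)+;
      simp add: vec_eq_iff forall_3 xminus_sgrad_jac_def Let_def xminus_def axis_def field_simps)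

lemma has_cgrad_Yring_formula: "has_cgrad (\<lambda>z. Yring_formula z $ i) (Yring_formula_jac y i) y"
  unfolding Yring_formula_def
  by (rule has_cgrad_vector_3;
      rule has_cgrad_cong, (rule has_cgrad_rules)+;
      simp add: vec_eq_iff forall_3 Yring_formula_jac_def Let_def xden_def xminus_def axis_def
        field_simps)

lemma cdot_sgrad_Zf_self:
  assumes "y \<in> S2 - {north}"
  shows "cdot (sgrad Zf y) (sgrad Zf y) = 0"
proof -
  have y: "y \<in> S2" and w: "xden y \<noteq> 0"
    using assms xden_nonzero by auto
  show ?thesis
    using S2_coords_complex[OF y] w
    by (simp add: sgrad_Zf[OF assms] cdot_def sum_3 Zf_sgrad_def xplus_def of_real_coord3 field_simps;
        (intro conjI disjI2)?; algebra)
qed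

lemma cdot_sgrad_Zf_xminus:
  assumes "y \<in> S2 - {north}"
  shows "cdot (sgrad Zf y) (sgrad xminus y) = 1"
proof -
  have y: "y \<in> S2" and w: "xden y \<noteq> 0"
    using assms xden_nonzero by auto
  show ?thesis
    using S2_coords_complex[OF y] w
    by (simp add: sgrad_Zf[OF assms] sgrad_xminus[OF y] cdot_def sum_3 Zf_sgrad_def xminus_sgrad_def
        xplus_def xminus_def of_real_coord3 field_simps;
        (intro conjI disjI2)?; algebra)
qed

lemma slap_Zf:
  assumes "y \<in> S2 - {north}"
  shows "slap Zf y = 0"
proof -
  have y: "y \<in> S2" and w: "xden y \<noteq> 0"
    using assms xden_nonzero by auto
  have "slap Zf y = sdiv Zf_sgrad y"
    unfolding slap_def using assms
    by (intro sdiv_cong[of "- {north}"]) (auto simp: sgrad_Zf open_Compl)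
  also have "\<dots> = (\<Sum>i\<in>UNIV. ctproj y (Zf_sgrad_jac y i) $ i)"
    using y has_cgrad_Zf_sgrad[OF w] by (rule has_cgrad_imp_sdiv)
  also have "\<dots> = 0"
    using S2_coords_complex[OF y] w
    by (simp add: sum_3 Zf_sgrad_jac_def Let_def ctproj_def cdot_def cvec_def xplus_def
        of_real_coord3 field_simps;
        (intro conjI disjI2)?; algebra)
  finally show ?thesis .
qed

lemma slap_xminus:
  assumes y: "y \<in> S2"
  shows "slap xminus y = - 2 * xminus y"
proof -
  have "slap xminus y = sdiv xminus_sgrad y"
    unfolding slap_def using y
    by (intro sdiv_cong[of UNIV]) (auto simp: sgrad_xminus)
  also have "\<dots> = (\<Sum>i\<in>UNIV. ctproj y (xminus_sgrad_jac y i) $ i)"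
    using y has_cgrad_xminus_sgrad by (rule has_cgrad_imp_sdiv)
  also have "\<dots> = - 2 * xminus y"
    using S2_coords_complex[OF y]
    by (simp add: sum_3 xminus_sgrad_jac_def Let_def ctproj_def cdot_def cvec_def xminus_def
        field_simps;
        (intro conjI disjI2)?; algebra)
  finally show ?thesis .
qed

lemma sdiv_Yring:
  assumes "y \<in> S2 - {north}"
  shows "sdiv Yring y = - xminus y"
proof -
  have y: "y \<in> S2" and w: "xden y \<noteq> 0"
    using assms xden_nonzero by auto
  have "sdiv Yring y = sdiv Yring_formula y"
    using assms by (intro sdiv_cong[of "- {north}"]) (auto simp: Yring_eq open_Compl)
  also have "\<dots> = (\<Sum>i\<in>UNIV. ctproj y (Yring_formula_jac y i) $ i)"
    using y has_cgrad_Yring_formula by (rule has_cgrad_imp_sdiv)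
  also have "\<dots> = - xminus y"
    using S2_coords_complex[OF y] w
    by (simp add: sum_3 Yring_formula_jac_def Let_def ctproj_def cdot_def cvec_def xminus_def
        of_real_coord3 field_simps)
  finally show ?thesis .
qed

lemma sdifferentiable_Yring:
  assumes "y \<in> S2 - {north}"
  shows "sdifferentiable (\<lambda>z. Yring z $ i) y"
proof (rule sdifferentiable_cong[of "- {north}"])
  show "sdifferentiable (\<lambda>z. Yring_formula z $ i) y"
    using assms by (intro has_cgrad_imp_sdifferentiable[OF _ has_cgrad_Yring_formula]) blast
  show "Yring_formula z $ i = Yring z $ i" if "z \<in> S2 \<inter> - {north}" for z
    using that by (simp add: Yring_eq)
qed (use assms in \<open>auto simp: open_Compl\<close>)

lemma twice_sdifferentiable_on_Zf:
  assumes "open U" "north \<notin> U"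
  shows "twice_sdifferentiable_on U Zf"
proof (rule twice_sdifferentiable_onI[where G = Zf_sgrad, OF assms(1)])
  fix z i assume z: "z \<in> S2 \<inter> U"
  then have z': "z \<in> S2 - {north}"
    using assms(2) by blast
  then have "xden z \<noteq> 0"
    using xden_nonzero by blast
  with z show "sdifferentiable Zf z" "sdifferentiable (\<lambda>w. Zf_sgrad w $ i) z"
    by (auto intro: has_cgrad_imp_sdifferentiable has_cgrad_Zf has_cgrad_Zf_sgrad)
  show "sgrad Zf z = Zf_sgrad z"
    using z' by (rule sgrad_Zf)
qed

lemma twice_sdifferentiable_on_xminus: "open U \<Longrightarrow> twice_sdifferentiable_on U xminus"
  by (rule twice_sdifferentiable_onI[where G = xminus_sgrad])
     (auto intro: has_cgrad_imp_sdifferentiable has_cgrad_xminus has_cgrad_xminus_sgrad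
       simp: sgrad_xminus)

section \<open>The Helmholtz equation for \<open>\<nabla>\<^sub>A (h(Z) Y\<^sup>A)\<close>\<close>

lemma slap_compose_Zf:
  assumes U: "open U" "north \<notin> U" "y \<in> S2 \<inter> U"
    and D: "\<And>z. z \<in> S2 \<inter> U \<Longrightarrow> Zf z \<in> D"
    and h: "\<And>w. w \<in> D \<Longrightarrow> (h has_field_derivative h' w) (at w)"
    and h': "\<And>w. w \<in> D \<Longrightarrow> (h' has_field_derivative h'' w) (at w)"
  shows "slap (\<lambda>z. h (Zf z)) y = 0"
proof -
  have y: "y \<in> S2 - {north}"
    using U by auto
  show ?thesis
    using slap_compose[OF U(1,3) twice_sdifferentiable_on_Zf[OF U(1,2)] D h h']
    by (simp add: cdot_sgrad_Zf_self[OF y] slap_Zf[OF y])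
qed

lemma sdiv_scaled_Yring:
  assumes U: "open U" "north \<notin> U" "y \<in> S2 \<inter> U"
    and D: "\<And>z. z \<in> S2 \<inter> U \<Longrightarrow> Zf z \<in> D"
    and h: "\<And>w. w \<in> D \<Longrightarrow> (h has_field_derivative h' w) (at w)"
  shows "sdiv (\<lambda>z. cscale (h (Zf z)) (Yring z)) y = h' (Zf y) - h (Zf y) * xminus y"
proof -
  have y: "y \<in> S2" "y \<in> S2 - {north}"
    using U by auto
  then have dZ: "sdifferentiable Zf y"
    using has_cgrad_imp_sdifferentiable[OF _ has_cgrad_Zf] xden_nonzero by blast
  have "sdiv (\<lambda>z. cscale (h (Zf z)) (Yring z)) y =
      cdot (sgrad (\<lambda>z. h (Zf z)) y) (Yring y) + h (Zf y) * sdiv Yring y"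
    using sdifferentiable_compose[OF y(1) dZ h[OF D[OF U(3)]]] sdifferentiable_Yring[OF y(2)]
    by (rule sdiv_cscale[OF y(1)])
  also have "sgrad (\<lambda>z. h (Zf z)) y = cscale (h' (Zf y)) (sgrad Zf y)"
    using y(1) dZ h[OF D[OF U(3)]] by (rule sgrad_compose)
  finally show ?thesis
    by (simp add: cdot_cscale_left cdot_sgrad_Zf_Yring[OF y(2)] sdiv_Yring[OF y(2)])
qed

theorem slap_sdiv_scaled_Yring:
  assumes U: "open U" "north \<notin> U" "y \<in> S2 \<inter> U"
    and D: "\<And>z. z \<in> S2 \<inter> U \<Longrightarrow> Zf z \<in> D"
    and h: "\<And>w. w \<in> D \<Longrightarrow> (h has_field_derivative h' w) (at w)"
    and h': "\<And>w. w \<in> D \<Longrightarrow> (h' has_field_derivative h'' w) (at w)"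
    and h'': "\<And>w. w \<in> D \<Longrightarrow> (h'' has_field_derivative h''' w) (at w)"
  shows "slap (sdiv (\<lambda>z. cscale (h (Zf z)) (Yring z))) y
    + 2 * sdiv (\<lambda>z. cscale (h (Zf z)) (Yring z)) y = 0"
proof -
  have y: "y \<in> S2 - {north}"
    using U by auto
  have Z: "twice_sdifferentiable_on U Zf"
    using U(1,2) by (rule twice_sdifferentiable_on_Zf)
  have hZ: "twice_sdifferentiable_on U (\<lambda>z. h (Zf z))"
    using U(1) Z D h h' by (rule twice_sdifferentiable_on_compose)
  have "sgrad (\<lambda>z. h (Zf z)) y = cscale (h' (Zf y)) (sgrad Zf y)"
    using y twice_sdifferentiable_onD(1)[OF Z U(3)] h[OF D[OF U(3)]] by (intro sgrad_compose) auto
  then have hZ_xminus: "slap (\<lambda>z. h (Zf z) * xminus z) y = 2 * h' (Zf y) - 2 * h (Zf y) * xminus y"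
    using slap_mult[OF U(1,3) hZ twice_sdifferentiable_on_xminus[OF U(1)]] slap_xminus[of y] y
      slap_compose_Zf[OF U D h h']
    by (simp add: cdot_cscale_left cdot_sgrad_Zf_xminus[OF y])
  have "slap (sdiv (\<lambda>z. cscale (h (Zf z)) (Yring z))) y
      = slap (\<lambda>z. h' (Zf z) - h (Zf z) * xminus z) y"
    using sdiv_scaled_Yring[OF U(1,2) _ D h] by (intro slap_cong[OF U(1,3)])
  also have "\<dots> = slap (\<lambda>z. h' (Zf z)) y - slap (\<lambda>z. h (Zf z) * xminus z) y"
    using U(1,3) twice_sdifferentiable_on_compose[OF U(1) Z D h' h'']
      twice_sdifferentiable_on_mult[OF U(1) hZ twice_sdifferentiable_on_xminus[OF U(1)]]
    by (rule slap_diff)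
  finally show ?thesis
    using slap_compose_Zf[OF U D h' h''] hZ_xminus sdiv_scaled_Yring[OF U D h] by simp
qed

lemma has_field_derivative_cmult_power:
  fixes c z :: complex
  shows "((\<lambda>w. c * w ^ n) has_field_derivative c * of_nat n * z ^ (n - 1)) (at z)"
  using DERIV_cmult[OF DERIV_power[OF DERIV_ident], of c n z] by (simp add: mult.assoc)

lemma has_field_derivative_cmult_power_int:
  fixes c z :: complex
  assumes "z \<noteq> 0"
  shows "((\<lambda>w. c * w powi k) has_field_derivative c * of_int k * z powi (k - 1)) (at z)"
proof -
  have "((\<lambda>w. w powi k) has_field_derivative of_int k * z powi (k - 1) * 1) (at z)"
    by (rule DERIV_power_int[OF DERIV_ident]) (simp add: assms)
  from DERIV_cmult[OF this, of c] show ?thesis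
    by (simp add: mult.assoc)
qed

theorem mainTheorem18:
  fixes m :: int and x :: "real^3"
  assumes "x \<in> S2 - {north}"
    and "m + 1 \<ge> 0 \<or> x \<noteq> south"
  shows "slap (sdiv (Yfield m)) x + 2 * sdiv (Yfield m) x = 0"
proof (cases "m + 1 \<ge> 0")
  case True
  \<comment> \<open>\<open>Z\<close> vanishes at the admitted south pole: work with natural powers\<close>
  define n where "n = nat (m + 1)"
  have Y: "Yfield m = (\<lambda>z. cscale (Zf z ^ n) (Yring z))"
    using True by (simp add: Yfield_def n_def fun_eq_iff power_int_def)
  have h: "((\<lambda>w. w ^ n) has_field_derivative of_nat n * w ^ (n - 1)) (at w)" for w :: complex
    using has_field_derivative_cmult_power[of 1 n w] by simp
  show ?thesis
    unfolding Y
    by (rule slap_sdiv_scaled_Yring[of "- {north}" x UNIV, OF _ _ _ _ h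
          has_field_derivative_cmult_power has_field_derivative_cmult_power])
       (use assms(1) in \<open>auto simp: open_Compl\<close>)
next
  case False
  have h: "((\<lambda>w. w powi (m + 1)) has_field_derivative of_int (m + 1) * w powi m) (at w)"
    if "w \<in> - {0}" for w :: complex
    using has_field_derivative_cmult_power_int[of w 1 "m + 1"] that by simp
  have d: "((\<lambda>w. c * w powi k) has_field_derivative c * of_int k * w powi (k - 1)) (at w)"
    if "w \<in> - {0}" for c w :: complex and k
    using has_field_derivative_cmult_power_int[of w c k] that by simp
  show ?thesis
    unfolding Yfield_def
    by (rule slap_sdiv_scaled_Yring[of "- {north, south}" x "- {0}", OF _ _ _ _ h d d])
       (use assms False Zf_nonzero in \<open>auto simp: open_Compl\<close>)
qed

end
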